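(* There is an absolute constant $C$ such that for all positive integers $n$, $$M_{\mathrm{Schur}}(n,3)\le \frac{n^2}{67}+Cn \qquad\text{and}\qquad M_{\mathrm{Schur}}(n,4)\le \frac{n^2}{496}+Cn .$$ (The bound for 3 colors is attained, up to $O(n)$, by the coloring that colors consecutive blocks of $[n]$ of lengths $\frac{10n}{67},\frac{14n}{67},\frac{2n}{67},\frac{28n}{67},\frac{n}{67},\frac{11n}{67},\frac{n}{67}$ with colors $0,1,0,2,0,1,0$ respectively; the bound for 4 colors by consecutive blocks of lengths $\frac{e_i n}{496}$ with $(e_i)=(28,38,5,75,2,30,2,182,1,29,1,72,1,29,1)$ and colors $0,1,0,2,0,1,0,3,0,1,0,2,0,1,0$.)
   Context: For a positive integer $n$ write $[n]=\{1,\dots,n\}$. A $k$-coloring of $[n]$ is a map $\chi:[n]\to\{0,\dots,k-1\}$. A Schur triple is an ordered triple $(x,y,z)\in[n]^3$ with $x+y=z$ (so $(x,y,z)$ and $(y,x,z)$ with $x\neq y$ are counted separately); it is monochromatic if $\chi(x)=\chi(y)=\chi(z)$. $M_{\mathrm{Schur}}(n,k)$ is the minimum over all $k$-colorings of $[n]$ of the number of monochromatic Schur triples. *)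

theory Defs
  imports Complex_Main
begin

definition is_coloring :: "nat \<Rightarrow> nat \<Rightarrow> (nat \<Rightarrow> nat) \<Rightarrow> bool" where
  "is_coloring n k chi \<longleftrightarrow> (\<forall>x\<in>{1..n}. chi x < k)"

definition mono_schur_count :: "nat \<Rightarrow> (nat \<Rightarrow> nat) \<Rightarrow> nat" where
  "mono_schur_count n chi = card {(x, y, z). x \<in> {1..n} \<and> y \<in> {1..n} \<and> z \<in> {1..n}
      \<and> x + y = z \<and> chi x = chi y \<and> chi y = chi z}"

definition M_Schur :: "nat \<Rightarrow> nat \<Rightarrow> nat" where
  "M_Schur n k = (LEAST m. \<exists>chi. is_coloring n k chi \<and> mono_schur_count n chi = m)"

end

theory Submission
  imports Defs
begin

text \<open>Blow up a colour pattern \<open>pat\<close> of length \<open>m\<close> into the colouring of \<open>[m q]\<close> whose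
  \<open>a\<close>-th block of \<open>q\<close> consecutive points gets colour \<open>pat ! a\<close>. For \<open>x = a q + i + 1\<close> and
  \<open>y = b q + j + 1\<close> with \<open>i, j < q\<close>, the sum \<open>x + y\<close> lies in block \<open>a + b + c\<close>, where the carry
  \<open>c = (i + j + 1) div q\<close> is \<open>0\<close> for \<open>q (q - 1) / 2\<close> and \<open>1\<close> for \<open>q (q + 1) / 2\<close> of the
  offset pairs \<open>(i, j)\<close>. So the colouring has at most \<open>w q (q + 1) / 2\<close> monochromatic Schur
  triples, where \<open>w\<close> counts the monochromatic triples \<open>(a, b, a + b + c)\<close> of the pattern for
  both carries. The two patterns of the paper have \<open>w = 2 m\<close>, and \<open>q = \<lceil>n / m\<rceil>\<close> turns
  \<open>m q (q + 1)\<close> into \<open>n\<^sup>2 / m + O(n)\<close>.\<close>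

lemma mono_schur_count_eq_card_pairs:
  "mono_schur_count n chi =
     card {(x, y). x \<in> {1..n} \<and> y \<in> {1..n} \<and> x + y \<le> n \<and> chi x = chi y \<and> chi y = chi (x + y)}"
  (is "_ = card ?S")
proof -
  have "{(x, y, z). x \<in> {1..n} \<and> y \<in> {1..n} \<and> z \<in> {1..n} \<and> x + y = z \<and> chi x = chi y \<and> chi y = chi z}
      = (\<lambda>(x, y). (x, y, x + y)) ` ?S"
    by (auto simp: image_iff)
  moreover have "inj_on (\<lambda>(x, y). (x, y, x + y)) ?S"
    by (auto simp: inj_on_def)
  ultimately show ?thesis
    by (simp add: mono_schur_count_def card_image)
qed

lemma mono_schur_count_mono:
  assumes "n \<le> n'"
  shows "mono_schur_count n chi \<le> mono_schur_count n' chi"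
  unfolding mono_schur_count_eq_card_pairs
  by (rule card_mono) (use assms in \<open>auto intro: finite_subset[of _ "{1..n'} \<times> {1..n'}"]\<close>)

lemma M_Schur_le_mono_schur_count: "is_coloring n k chi \<Longrightarrow> M_Schur n k \<le> mono_schur_count n chi"
  unfolding M_Schur_def by (rule Least_le) blast

fun count_common :: "nat \<Rightarrow> nat list \<Rightarrow> nat list \<Rightarrow> nat" where
  "count_common c (u # us) (v # vs) = (if u = c \<and> v = c then 1 else 0) + count_common c us vs"
| "count_common c _ _ = 0"

lemma count_common_eq_card:
  "count_common c xs ys = card {i. i < length xs \<and> i < length ys \<and> xs ! i = c \<and> ys ! i = c}"
proof -
  have "count_common c xs ys = length (filter (\<lambda>(u, v). u = c \<and> v = c) (zip xs ys))"
    by (induction c xs ys rule: count_common.induct) auto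
  then show ?thesis
    by (simp add: length_filter_conv_card cong: conj_cong)
qed

definition pattern_schur_pairs :: "nat list \<Rightarrow> nat \<Rightarrow> (nat \<times> nat) set" where
  "pattern_schur_pairs pat d =
     {(a, b). a + b + d < length pat \<and> pat ! a = pat ! b \<and> pat ! b = pat ! (a + b + d)}"

definition pattern_weight :: "nat list \<Rightarrow> nat" where
  "pattern_weight pat = card (pattern_schur_pairs pat 0) + card (pattern_schur_pairs pat 1)"

lemma pattern_schur_pairs_subset: "pattern_schur_pairs pat d \<subseteq> {..<length pat} \<times> {..<length pat}"
  by (auto simp: pattern_schur_pairs_def)

lemma finite_pattern_schur_pairs [simp]: "finite (pattern_schur_pairs pat d)"
  using pattern_schur_pairs_subset by (rule finite_subset) simp

lemma card_pattern_schur_pairs: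
  "card (pattern_schur_pairs pat d) = (\<Sum>a<length pat. count_common (pat ! a) pat (drop (a + d) pat))"
proof -
  have "pattern_schur_pairs pat d =
      Sigma {..<length pat} (\<lambda>a. {b. b < length pat \<and> b < length (drop (a + d) pat)
                                     \<and> pat ! b = pat ! a \<and> drop (a + d) pat ! b = pat ! a})"
    by (auto simp: pattern_schur_pairs_def add.commute add.left_commute)
  then show ?thesis
    by (simp add: count_common_eq_card)
qed

fun suffix_weight :: "nat list \<Rightarrow> nat list \<Rightarrow> nat" where
  "suffix_weight pat [] = 0"
| "suffix_weight pat (c # cs) = count_common c pat (c # cs) + count_common c pat cs + suffix_weight pat cs"

lemma suffix_weight_eq_sum:
  "suffix_weight pat cs =
     (\<Sum>a<length cs. count_common (cs ! a) pat (drop a cs) + count_common (cs ! a) pat (drop (Suc a) cs))"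
  by (induction cs) (simp_all add: sum.lessThan_Suc_shift del: sum.lessThan_Suc)

lemma pattern_weight_eq_suffix_weight: "pattern_weight pat = suffix_weight pat pat"
  by (simp add: pattern_weight_def card_pattern_schur_pairs suffix_weight_eq_sum sum.distrib)

definition carry_pairs :: "nat \<Rightarrow> nat \<Rightarrow> (nat \<times> nat) set" where
  "carry_pairs q d = {(i, j). i < q \<and> j < q \<and> (i + j + 1) div q = d}"

lemma finite_carry_pairs [simp]: "finite (carry_pairs q d)"
  by (rule finite_subset[of _ "{..<q} \<times> {..<q}"]) (auto simp: carry_pairs_def)

lemma carry_pairs_0: "carry_pairs q 0 = {(i, j). i + j + 1 < q}"
  by (auto simp: carry_pairs_def div_eq_0_iff)

lemma carry_pairs_1: "carry_pairs q 1 = {(i, j). i < q \<and> j < q \<and> q \<le> i + j + 1}"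
  by (auto simp: carry_pairs_def div_if div_eq_0_iff)

lemma card_carry_pairs_1: "2 * card (carry_pairs q 1) = q * (q + 1)"
proof -
  have "carry_pairs q 1 = Sigma {..<q} (\<lambda>i. {q - Suc i..<q})"
    unfolding carry_pairs_1 by auto
  then have "card (carry_pairs q 1) = (\<Sum>i<q. Suc i)"
    by simp
  moreover have "2 * (\<Sum>i<q. Suc i) = q * (q + 1)"
    by (induction q) auto
  ultimately show ?thesis
    by simp
qed

lemma card_carry_pairs_0_le: "card (carry_pairs q 0) \<le> card (carry_pairs q 1)"
proof -
  have "carry_pairs q 0 \<union> carry_pairs q 1 = {..<q} \<times> {..<q}"
    unfolding carry_pairs_0 carry_pairs_1 by auto
  moreover have "carry_pairs q 0 \<inter> carry_pairs q 1 = {}"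
    unfolding carry_pairs_0 carry_pairs_1 by auto
  ultimately have "card (carry_pairs q 0) + card (carry_pairs q 1) = q * q"
    by (metis card_Un_disjoint card_cartesian_product card_lessThan finite_carry_pairs)
  then show ?thesis
    using card_carry_pairs_1[of q] by simp
qed

definition block_coloring :: "nat \<Rightarrow> nat list \<Rightarrow> nat \<Rightarrow> nat" where
  "block_coloring q pat x = pat ! ((x - 1) div q)"

lemma is_coloring_block_coloring:
  assumes "set pat \<subseteq> {..<k}" and "n \<le> length pat * q"
  shows "is_coloring n k (block_coloring q pat)"
  unfolding is_coloring_def block_coloring_def
proof
  fix x assume "x \<in> {1..n}"
  then have "x - 1 < length pat * q"
    using assms(2) by auto
  then have "(x - 1) div q < length pat"
    by (rule less_mult_imp_div_less)
  then show "pat ! ((x - 1) div q) < k"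
    using assms(1) nth_mem by blast
qed

lemma block_index_add:
  fixes q :: nat
  assumes "0 < q"
  shows "((a * q + i + 1) + (b * q + j + 1) - 1) div q = a + b + (i + j + 1) div q"
proof -
  have sum_eq: "(a * q + i + 1) + (b * q + j + 1) - 1 = (i + j + 1) + (a + b) * q"
    by (simp add: algebra_simps)
  show ?thesis
    unfolding sum_eq using assms by (subst div_mult_self1) simp_all
qed

lemma block_coloring_schur_pair:
  assumes "0 < q" and x: "1 \<le> x" and y: "1 \<le> y" and xy: "x + y \<le> length pat * q"
    and mono: "block_coloring q pat x = block_coloring q pat y"
      "block_coloring q pat y = block_coloring q pat (x + y)"
  obtains a b i j d where "x = a * q + i + 1" and "y = b * q + j + 1" and "d < 2"
    and "(a, b) \<in> pattern_schur_pairs pat d" and "(i, j) \<in> carry_pairs q d"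
proof
  define a where "a = (x - 1) div q"
  define i where "i = (x - 1) mod q"
  define b where "b = (y - 1) div q"
  define j where "j = (y - 1) mod q"
  define d where "d = (i + j + 1) div q"
  show x_eq: "x = a * q + i + 1" and y_eq: "y = b * q + j + 1"
    using x y by (simp_all add: a_def i_def b_def j_def)
  have ij: "i < q" "j < q"
    using assms(1) by (simp_all add: i_def j_def)
  then show "d < 2"
    by (simp add: d_def less_mult_imp_div_less)
  show "(i, j) \<in> carry_pairs q d"
    using ij by (simp add: carry_pairs_def d_def)
  have sum_index: "(x + y - 1) div q = a + b + d"
    unfolding x_eq y_eq d_def using assms(1) by (rule block_index_add)
  have "x + y - 1 < length pat * q"
    using x xy by simp
  then have "a + b + d < length pat"
    unfolding sum_index[symmetric] by (rule less_mult_imp_div_less)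
  moreover have "block_coloring q pat x = pat ! a" "block_coloring q pat y = pat ! b"
    by (simp_all add: block_coloring_def a_def b_def)
  moreover have "block_coloring q pat (x + y) = pat ! (a + b + d)"
    unfolding block_coloring_def sum_index ..
  ultimately show "(a, b) \<in> pattern_schur_pairs pat d"
    using mono by (auto simp: pattern_schur_pairs_def)
qed

lemma mono_schur_count_block_coloring_le:
  assumes "0 < q"
  shows "2 * mono_schur_count (length pat * q) (block_coloring q pat) \<le> pattern_weight pat * (q * (q + 1))"
proof -
  define m where "m = length pat"
  define chi where "chi = block_coloring q pat"
  define S where "S = {(x, y). x \<in> {1..m * q} \<and> y \<in> {1..m * q} \<and> x + y \<le> m * q
                                \<and> chi x = chi y \<and> chi y = chi (x + y)}"
  define P where "P = pattern_schur_pairs pat"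
  define C where "C = carry_pairs q"
  define D where "D = P 0 \<times> C 0 \<union> P 1 \<times> C 1"
  define f where "f = (\<lambda>((a, b), (i, j)). (a * q + i + 1, b * q + j + 1))"
  have "S \<subseteq> f ` D"
  proof
    fix p assume "p \<in> S"
    then obtain x y where p: "p = (x, y)" and x: "1 \<le> x" and y: "1 \<le> y"
      and xy: "x + y \<le> length pat * q"
      and mono: "block_coloring q pat x = block_coloring q pat y"
        "block_coloring q pat y = block_coloring q pat (x + y)"
      by (auto simp: S_def chi_def m_def)
    obtain a b i j d where "x = a * q + i + 1" and "y = b * q + j + 1" and "d < 2"
      and "(a, b) \<in> pattern_schur_pairs pat d" and "(i, j) \<in> carry_pairs q d"
      by (rule block_coloring_schur_pair[OF assms x y xy mono])
    then have "((a, b), (i, j)) \<in> D" and "p = f ((a, b), (i, j))"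
      by (auto simp: p f_def D_def P_def C_def less_2_cases_iff)
    then show "p \<in> f ` D"
      by blast
  qed
  have "mono_schur_count (m * q) chi = card S"
    by (simp add: S_def mono_schur_count_eq_card_pairs)
  also have "\<dots> \<le> card (f ` D)"
    by (rule card_mono[OF _ \<open>S \<subseteq> f ` D\<close>]) (simp add: D_def P_def C_def)
  also have "\<dots> \<le> card D"
    by (rule card_image_le) (simp add: D_def P_def C_def)
  also have "\<dots> \<le> card (P 0) * card (C 0) + card (P 1) * card (C 1)"
    unfolding D_def by (rule order_trans[OF card_Un_le]) (simp add: card_cartesian_product)
  also have "\<dots> \<le> pattern_weight pat * card (C 1)"
    using card_carry_pairs_0_le[of q]
    by (simp add: pattern_weight_def P_def C_def algebra_simps)
  finally have "2 * mono_schur_count (m * q) chi \<le> 2 * (pattern_weight pat * card (C 1))"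
    by (rule mult_le_mono2)
  also have "\<dots> = pattern_weight pat * (q * (q + 1))"
    by (metis C_def card_carry_pairs_1 mult.left_commute)
  finally show ?thesis
    by (simp add: m_def chi_def)
qed

lemma block_count_estimate:
  fixes m q n :: nat
  assumes "0 < m" and "0 < n" and "m * q \<le> n + m"
  shows "real (m * q * (q + 1)) \<le> real n ^ 2 / real m + (2 * real m + 3) * real n"
proof -
  have t: "real m * real q \<le> real n + real m"
    using assms(3) by (metis of_nat_add of_nat_le_iff of_nat_mult)
  have "real (m * q * (q + 1)) = (real m * real q) ^ 2 / real m + real m * real q"
    using assms(1) by (simp add: field_simps power2_eq_square)
  also have "\<dots> \<le> (real n + real m) ^ 2 / real m + (real n + real m)"
    using t by (intro add_mono divide_right_mono power_mono) simp_all
  also have "\<dots> = real n ^ 2 / real m + 3 * real n + 2 * real m"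
    using assms(1) by (simp add: field_simps power2_eq_square)
  also have "\<dots> \<le> real n ^ 2 / real m + (2 * real m + 3) * real n"
    using assms(2) by (simp add: algebra_simps mult_le_cancel_left1)
  finally show ?thesis .
qed

lemma M_Schur_le_pattern:
  assumes colors: "set pat \<subseteq> {..<k}" and "pat \<noteq> []"
    and weight: "pattern_weight pat \<le> 2 * length pat" and "0 < n"
  shows "real (M_Schur n k) \<le> real n ^ 2 / real (length pat) + (2 * real (length pat) + 3) * real n"
proof -
  define m where "m = length pat"
  define q where "q = (n + m - 1) div m"
  have "0 < m"
    using \<open>pat \<noteq> []\<close> by (simp add: m_def)
  have "m * q + (n + m - 1) mod m = n + m - 1"
    by (simp add: q_def)
  moreover have "(n + m - 1) mod m < m"
    using \<open>0 < m\<close> by simp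
  ultimately have n_le: "n \<le> m * q" and le_n: "m * q \<le> n + m"
    by linarith+
  then have "0 < q"
    using \<open>0 < n\<close> by (cases q) simp_all
  have "2 * mono_schur_count (m * q) (block_coloring q pat) \<le> pattern_weight pat * (q * (q + 1))"
    unfolding m_def using \<open>0 < q\<close> by (rule mono_schur_count_block_coloring_le)
  also have "\<dots> \<le> 2 * m * (q * (q + 1))"
    unfolding m_def using weight by (rule mult_le_mono1)
  finally have count_le: "mono_schur_count (m * q) (block_coloring q pat) \<le> m * q * (q + 1)"
    by (simp add: algebra_simps)
  have "M_Schur n k \<le> mono_schur_count n (block_coloring q pat)"
    using colors n_le by (intro M_Schur_le_mono_schur_count is_coloring_block_coloring) (simp_all add: m_def)
  also have "\<dots> \<le> mono_schur_count (m * q) (block_coloring q pat)"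
    using n_le by (rule mono_schur_count_mono)
  also note count_le
  finally have "real (M_Schur n k) \<le> real (m * q * (q + 1))"
    by (simp only: of_nat_le_iff)
  also note block_count_estimate[OF \<open>0 < m\<close> \<open>0 < n\<close> le_n]
  finally show ?thesis
    by (simp only: m_def)
qed

definition block_pattern :: "(nat \<times> nat) list \<Rightarrow> nat list" where
  "block_pattern bs = concat (map (\<lambda>(l, c). replicate l c) bs)"

definition schur_pattern_3 :: "nat list" where
  "schur_pattern_3 = block_pattern [(10, 0), (14, 1), (2, 0), (28, 2), (1, 0), (11, 1), (1, 0)]"

definition schur_pattern_4 :: "nat list" where
  "schur_pattern_4 = block_pattern
     [(28, 0), (38, 1), (5, 0), (75, 2), (2, 0), (30, 1), (2, 0), (182, 3),
      (1, 0), (29, 1), (1, 0), (72, 2), (1, 0), (29, 1), (1, 0)]"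

lemma pattern_weight_schur_pattern_3: "pattern_weight schur_pattern_3 = 134"
  unfolding pattern_weight_eq_suffix_weight schur_pattern_3_def by code_simp

lemma pattern_weight_schur_pattern_4: "pattern_weight schur_pattern_4 = 992"
  unfolding pattern_weight_eq_suffix_weight schur_pattern_4_def by code_simp

theorem theorem7:
  shows "\<exists>C::real. \<forall>n::nat. n > 0 \<longrightarrow>
     real (M_Schur n 3) \<le> real n ^ 2 / 67 + C * real n \<and>
     real (M_Schur n 4) \<le> real n ^ 2 / 496 + C * real n"
proof (intro exI[of _ 995] allI impI conjI)
  fix n :: nat assume "0 < n"
  have "real (M_Schur n 3) \<le> real n ^ 2 / 67 + 137 * real n"
    using M_Schur_le_pattern[of schur_pattern_3 3 n] pattern_weight_schur_pattern_3 \<open>0 < n\<close>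
    by (simp add: schur_pattern_3_def block_pattern_def)
  then show "real (M_Schur n 3) \<le> real n ^ 2 / 67 + 995 * real n"
    by simp
  show "real (M_Schur n 4) \<le> real n ^ 2 / 496 + 995 * real n"
    using M_Schur_le_pattern[of schur_pattern_4 4 n] pattern_weight_schur_pattern_4 \<open>0 < n\<close>
    by (simp add: schur_pattern_4_def block_pattern_def)
qed

end
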